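(* Let $N=\{1,\dots,n\}$, $\eta>0$, integers $B\ge1$, $Q\ge1$. Let $(A(k))_{k\ge0}$ be $n\times n$ matrices, let $x(0)\in\mathbb{R}^n$ have every component a multiple of $1/Q$, not all components equal, and define componentwise $x_i(k+1)=\lfloor\sum_{j=1}^n a_{ij}(k)x_j(k)\rfloor$, where $\lfloor\cdot\rfloor$ denotes rounding down to the nearest multiple of $1/Q$. Assume: (i) for every $k$, $A(k)$ is doubly stochastic with positive diagonal entries and every positive entry of $A(k)$ is at least $\eta$; (ii) for every integer $k\ge 0$, every permutation $\sigma$ of $N$ with $x_{\sigma(1)}(kB)\ge\cdots\ge x_{\sigma(n)}(kB)$, and every $d\in\{1,\dots,n-1\}$, either $x_{\sigma(d)}(kB)=x_{\sigma(d+1)}(kB)$, or there exist $t\in\{kB,\dots,(k+1)B-1\}$, $i\in\{\sigma(1),\dots,\sigma(d)\}$, $j\in\{\sigma(d+1),\dots,\sigma(n)\}$ such that $(i,j)$ or $(j,i)$ belongs to $\mathcal{E}(A(t))$. Then all $x_i(k)$ converge to a common limit $x_f$, and there is an absolute constant $c$ such that \[\Big|x_f-\frac1n\sum_{i=1}^n x_i(0)\Big|\le \frac{c}{Q}\,\frac{n^2}{\eta}\,B\log\big(Qn(U-L)\big),\] where $U=\max_i x_i(0)$ and $L=\min_i x_i(0)$.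
   Context: A matrix is doubly stochastic if it is nonnegative with all row and column sums equal to $1$. For a matrix $A=[a_{ij}]$, $\mathcal{E}(A)$ is the set of directed edges $(j,i)$ (including self-edges) with $a_{ij}>0$. *)

theory Defs
  imports Complex_Main "HOL-Combinatorics.Permutations"
begin

text \<open>Vectors and n-by-n matrices are indexed by N = {1..n}. A matrix sequence is
  A :: nat => nat => nat => real, with A k i j the (i,j) entry of A(k).\<close>

definition doubly_stochastic :: "nat \<Rightarrow> (nat \<Rightarrow> nat \<Rightarrow> real) \<Rightarrow> bool" where
  "doubly_stochastic n M \<longleftrightarrow>
     (\<forall>i\<in>{1..n}. \<forall>j\<in>{1..n}. M i j \<ge> 0) \<and>
     (\<forall>i\<in>{1..n}. (\<Sum>j=1..n. M i j) = 1) \<and>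
     (\<forall>j\<in>{1..n}. (\<Sum>i=1..n. M i j) = 1)"

definition edges :: "nat \<Rightarrow> (nat \<Rightarrow> nat \<Rightarrow> real) \<Rightarrow> (nat \<times> nat) set" where
  "edges n M = {(j, i). i \<in> {1..n} \<and> j \<in> {1..n} \<and> M i j > 0}"

definition floorQ :: "nat \<Rightarrow> real \<Rightarrow> real" where
  "floorQ Q y = real_of_int \<lfloor>real Q * y\<rfloor> / real Q"

primrec traj :: "nat \<Rightarrow> nat \<Rightarrow> (nat \<Rightarrow> nat \<Rightarrow> nat \<Rightarrow> real) \<Rightarrow> (nat \<Rightarrow> real) \<Rightarrow> nat \<Rightarrow> nat \<Rightarrow> real" where
  "traj n Q A x0 0 = x0"
| "traj n Q A x0 (Suc k) = (\<lambda>i. floorQ Q (\<Sum>j=1..n. A k i j * traj n Q A x0 k j))"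

end

theory Submission
  imports Defs "HOL-Analysis.Convex" "HOL-Analysis.Harmonic_Numbers"
begin

text \<open>
  Fix a window and let c be the smallest value at its start; c is a grid point. The energy
  \<open>\<Sum>\<^sub>i (x\<^sub>i - c)\<^sup>2\<close> never increases: averaging with row i loses the weighted variance
  \<open>\<Sum>\<^sub>j\<^sub>l a\<^sub>i\<^sub>j a\<^sub>i\<^sub>l (x\<^sub>j - x\<^sub>l)\<^sup>2 / 2\<close>, and rounding down to the grid never goes below c.
  Sort the values at the start of the window. Every nonzero gap between consecutive values is a
  cut that some edge crosses during the window; until that happens the two sides stay separated
  by the gap, so at the first crossing the cut contributes at least \<open>\<eta>/4\<close> times the squared
  gap to the energy loss. As the energy is at most \<open>n\<^sup>2\<close> times the sum of squared gaps, each
  window shrinks it by the factor \<open>1 - \<eta>/(4n\<^sup>2)\<close>, and once it drops below \<open>1/Q\<^sup>2\<close> all values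
  are one grid point, which is then fixed forever. Each step lowers the sum of the values by at
  most \<open>n/Q\<close> and never raises it, so the limit is within (number of steps)\<open>/Q\<close> of the average.
\<close>

section \<open>Rounding to the grid\<close>

definition on_grid :: "nat \<Rightarrow> real \<Rightarrow> bool" where
  "on_grid Q v \<longleftrightarrow> (\<exists>m::int. v = of_int m / real Q)"

lemma floorQ_le: "Q \<ge> 1 \<Longrightarrow> floorQ Q y \<le> y"
  unfolding floorQ_def by (simp add: divide_le_eq mult.commute)

lemma floorQ_gt:
  assumes "Q \<ge> 1"
  shows "y - 1 / real Q < floorQ Q y"
proof -
  have "real Q * y - 1 < of_int \<lfloor>real Q * y\<rfloor>" by linarith
  then have "(real Q * y - 1) / Q < of_int \<lfloor>real Q * y\<rfloor> / Q"
    using assms by (simp add: divide_strict_right_mono)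
  then show ?thesis using assms unfolding floorQ_def by (simp add: diff_divide_distrib)
qed

lemma on_grid_floorQ: "on_grid Q (floorQ Q y)"
  unfolding floorQ_def on_grid_def by blast

lemma floorQ_greatest:
  assumes "Q \<ge> 1" "on_grid Q v" "v \<le> y"
  shows "v \<le> floorQ Q y"
proof -
  obtain m :: int where m: "v = m / Q" using assms(2) unfolding on_grid_def by blast
  then have "m \<le> \<lfloor>real Q * y\<rfloor>"
    using assms by (simp add: divide_le_eq mult.commute le_floor_iff)
  then show ?thesis using m assms(1) unfolding floorQ_def by (simp add: divide_right_mono)
qed

lemma on_grid_gap:
  assumes "Q \<ge> 1" "on_grid Q u" "on_grid Q v" "v < u"
  shows "1 / real Q \<le> u - v"
proof -
  obtain a b :: int where "u = a / Q" "v = b / Q" using assms(2,3) unfolding on_grid_def by blast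
  moreover from this have "b + 1 \<le> a" using assms(1,4) by (simp add: divide_less_cancel)
  ultimately show ?thesis using assms(1) by (simp add: field_simps)
qed

section \<open>Sums of squares and sorted sequences\<close>

lemma weighted_mean_sq_eq:
  fixes a z :: "'a \<Rightarrow> real"
  assumes "finite S" "(\<Sum>j\<in>S. a j) = 1"
  shows "(\<Sum>j\<in>S. a j * z j)^2
       = (\<Sum>j\<in>S. a j * (z j)^2) - (\<Sum>j\<in>S. \<Sum>l\<in>S. a j * a l * (z j - z l)^2) / 2"
proof -
  have "(\<Sum>j\<in>S. \<Sum>l\<in>S. a j * a l * (z j - z l)^2)
      = (\<Sum>j\<in>S. \<Sum>l\<in>S. a j * (z j)^2 * a l) + (\<Sum>j\<in>S. \<Sum>l\<in>S. a j * (a l * (z l)^2))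
        - 2 * (\<Sum>j\<in>S. \<Sum>l\<in>S. a j * z j * (a l * z l))"
    by (simp add: power2_diff sum.distrib sum_subtractf sum_distrib_left algebra_simps)
  also have "\<dots> = (\<Sum>j\<in>S. a j * (z j)^2) * (\<Sum>l\<in>S. a l)
      + (\<Sum>j\<in>S. a j) * (\<Sum>l\<in>S. a l * (z l)^2) - 2 * (\<Sum>j\<in>S. a j * z j)^2"
    by (simp add: sum_product power2_eq_square)
  finally show ?thesis using assms(2) by (simp add: field_simps)
qed

lemma sum_squares_le_square_sum:
  fixes g :: "'a \<Rightarrow> real"
  assumes "finite D" "\<And>d. d \<in> D \<Longrightarrow> g d \<ge> 0"
  shows "(\<Sum>d\<in>D. (g d)^2) \<le> (\<Sum>d\<in>D. g d)^2"
proof -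
  have "(\<Sum>d\<in>D. (g d)^2) \<le> (\<Sum>d\<in>D. g d * (\<Sum>e\<in>D. g e))"
  proof (intro sum_mono)
    fix d assume "d \<in> D"
    then have "g d \<le> (\<Sum>e\<in>D. g e)" using assms by (intro member_le_sum) auto
    then show "(g d)^2 \<le> g d * (\<Sum>e\<in>D. g e)"
      using assms(2)[OF \<open>d \<in> D\<close>] by (simp add: power2_eq_square mult_left_mono)
  qed
  also have "\<dots> = (\<Sum>d\<in>D. g d)^2" by (simp add: power2_eq_square sum_distrib_right)
  finally show ?thesis .
qed

lemma sum_sq_gaps_le:
  fixes z :: "nat \<Rightarrow> real"
  assumes D: "D \<subseteq> {m..<n}" and dec: "\<And>d. d \<in> {m..<n} \<Longrightarrow> z (Suc d) \<le> z d"
    and upper: "\<And>d. d \<in> D \<Longrightarrow> z d \<le> u" and lower: "\<And>d. d \<in> D \<Longrightarrow> v \<le> z (Suc d)"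
  shows "(\<Sum>d\<in>D. (z d - z (Suc d))^2) \<le> (u - v)^2"
proof (cases "D = {}")
  case False
  have fin: "finite D" using D finite_subset by blast
  define a b where "a = Min D" and "b = Max D"
  have "a \<in> D" "b \<in> D" "D \<subseteq> {a..b}" using fin False by (auto simp: a_def b_def)
  moreover from this have "m \<le> a" "b < n" using D by auto
  ultimately have ab: "{a..b} \<subseteq> {m..<n}" by auto
  have "(\<Sum>d\<in>D. (z d - z (Suc d))^2) \<le> (\<Sum>d\<in>D. z d - z (Suc d))^2"
    using D dec by (intro sum_squares_le_square_sum fin) auto
  also have "\<dots> \<le> (u - v)^2"
  proof (rule power_mono)
    show "0 \<le> (\<Sum>d\<in>D. z d - z (Suc d))" using D dec by (intro sum_nonneg) auto
    have "(\<Sum>d\<in>D. z d - z (Suc d)) \<le> (\<Sum>d=a..b. z d - z (Suc d))"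
      using \<open>D \<subseteq> {a..b}\<close> ab dec by (intro sum_mono2) auto
    also have "\<dots> = z a - z (Suc b)"
      using sum_Suc_diff[of a b "\<lambda>d. - z d"] \<open>D \<subseteq> {a..b}\<close> \<open>a \<in> D\<close> by auto
    also have "\<dots> \<le> u - v" using upper[OF \<open>a \<in> D\<close>] lower[OF \<open>b \<in> D\<close>] by simp
    finally show "(\<Sum>d\<in>D. z d - z (Suc d)) \<le> u - v" .
  qed
  finally show ?thesis .
qed simp

lemma ex_sorting_permutation:
  fixes y :: "nat \<Rightarrow> real"
  obtains \<sigma> where "\<sigma> permutes {1..n}"
    and "\<And>p q. 1 \<le> p \<Longrightarrow> p \<le> q \<Longrightarrow> q \<le> n \<Longrightarrow> y (\<sigma> q) \<le> y (\<sigma> p)"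
proof -
  define xs where "xs = sort_key (\<lambda>i. - y i) [1..<n+1]"
  have xs: "distinct xs" "set xs = {1..n}" "length xs = n"
    unfolding xs_def by (auto simp: length_sort)
  have sorted: "sorted (map (\<lambda>i. - y i) xs)" unfolding xs_def by simp
  define \<sigma> where "\<sigma> p = (if p \<in> {1..n} then xs ! (p - 1) else p)" for p
  have "bij_betw ((!) xs \<circ> (\<lambda>p. p - 1)) {1..n} {1..n}"
  proof (rule bij_betw_trans)
    show "bij_betw (\<lambda>p. p - 1) {1..n} {..<n}"
      by (rule bij_betw_byWitness[where f'="\<lambda>p. p + 1"]) auto
    show "bij_betw ((!) xs) {..<n} {1..n}" using bij_betw_nth[OF xs(1)] xs by simp
  qed
  then have "bij_betw \<sigma> {1..n} {1..n}"
    by (rule bij_betw_cong[THEN iffD1, rotated]) (simp add: \<sigma>_def)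
  then have "\<sigma> permutes {1..n}" by (rule bij_imp_permutes) (auto simp: \<sigma>_def)
  moreover have "y (\<sigma> q) \<le> y (\<sigma> p)" if "1 \<le> p" "p \<le> q" "q \<le> n" for p q
    using sorted_nth_mono[OF sorted, of "p - 1" "q - 1"] that xs by (simp add: \<sigma>_def)
  ultimately show ?thesis using that by blast
qed

lemma permutes_image_split:
  assumes "\<sigma> permutes {1..n}" "d \<le> n"
  shows "\<sigma> ` {1..d} \<union> \<sigma> ` {Suc d..n} = {1..n}" "\<sigma> ` {1..d} \<inter> \<sigma> ` {Suc d..n} = {}"
proof -
  have "{1..d} \<union> {Suc d..n} = {1..n}" using assms(2) by auto
  then show "\<sigma> ` {1..d} \<union> \<sigma> ` {Suc d..n} = {1..n}"
    using permutes_image[OF assms(1)] by (simp flip: image_Un)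
  show "\<sigma> ` {1..d} \<inter> \<sigma> ` {Suc d..n} = {}"
    using image_Int[OF permutes_inj[OF assms(1)], of "{1..d}" "{Suc d..n}"] by auto
qed

lemma sorting_permutation_Min:
  fixes y :: "nat \<Rightarrow> real"
  assumes \<sigma>: "\<sigma> permutes {1..n}" and "n \<ge> 1"
    and sorted: "\<And>p q. 1 \<le> p \<Longrightarrow> p \<le> q \<Longrightarrow> q \<le> n \<Longrightarrow> y (\<sigma> q) \<le> y (\<sigma> p)"
  shows "Min (y ` {1..n}) = y (\<sigma> n)"
proof (rule Min_eqI)
  show "y (\<sigma> n) \<in> y ` {1..n}" using permutes_in_image[OF \<sigma>, of n] \<open>n \<ge> 1\<close> by simp
  fix v assume "v \<in> y ` {1..n}"
  then obtain i where "i \<in> \<sigma> ` {1..n}" "v = y i" using permutes_image[OF \<sigma>] by auto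
  then obtain p where "p \<in> {1..n}" "v = y (\<sigma> p)" by blast
  then show "y (\<sigma> n) \<le> v" using sorted[of p n] by simp
qed simp

lemma sum_sq_dist_min_le_sum_sq_gaps:
  fixes y :: "nat \<Rightarrow> real"
  assumes \<sigma>: "\<sigma> permutes {1..n}"
    and sorted: "\<And>p q. 1 \<le> p \<Longrightarrow> p \<le> q \<Longrightarrow> q \<le> n \<Longrightarrow> y (\<sigma> q) \<le> y (\<sigma> p)"
  shows "(\<Sum>i\<in>{1..n}. (y i - y (\<sigma> n))^2)
       \<le> (real n)^2 * (\<Sum>d\<in>{1..<n}. (y (\<sigma> d) - y (\<sigma> (Suc d)))^2)"
proof -
  have range: "y (\<sigma> n) \<le> y i \<and> y i \<le> y (\<sigma> 1)" if "i \<in> {1..n}" for i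
  proof -
    have "i \<in> \<sigma> ` {1..n}" using that permutes_image[OF \<sigma>] by simp
    then obtain p where "p \<in> {1..n}" "i = \<sigma> p" by blast
    then show ?thesis using sorted[of p n] sorted[of 1 p] by auto
  qed
  have "(\<Sum>i\<in>{1..n}. (y i - y (\<sigma> n))^2) \<le> (\<Sum>i\<in>{1..n}. (y (\<sigma> 1) - y (\<sigma> n))^2)"
    using range by (intro sum_mono power_mono) auto
  also have "\<dots> = real n * (\<Sum>d\<in>{1..<n}. y (\<sigma> d) - y (\<sigma> (Suc d)))^2"
  proof (cases "n = 0")
    case False
    then have "(\<Sum>d\<in>{1..<n}. y (\<sigma> d) - y (\<sigma> (Suc d))) = y (\<sigma> 1) - y (\<sigma> n)"
      using sum_Suc_diff'[of 1 n "\<lambda>d. - y (\<sigma> d)"] by simp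
    then show ?thesis by simp
  qed simp
  also have "\<dots> \<le> real n * ((\<Sum>d\<in>{1..<n}. (y (\<sigma> d) - y (\<sigma> (Suc d)))^2) * real (n - 1))"
    using sum_squared_le_sum_of_squares[of "\<lambda>d. y (\<sigma> d) - y (\<sigma> (Suc d))" "{1..<n}"]
    by (intro mult_left_mono) simp_all
  also have "\<dots> \<le> real n * ((\<Sum>d\<in>{1..<n}. (y (\<sigma> d) - y (\<sigma> (Suc d)))^2) * real n)"
    by (intro mult_left_mono mult_right_mono) (auto simp: sum_nonneg)
  finally show ?thesis by (simp add: power2_eq_square mult_ac)
qed

section \<open>Averaging with doubly stochastic matrices\<close>

lemma sum_product_restrict:
  fixes f g :: "'a \<Rightarrow> real"
  assumes "finite N" "S \<subseteq> N" "T \<subseteq> N"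
  shows "(\<Sum>j\<in>S. f j) * (\<Sum>l\<in>T. g l) = (\<Sum>j\<in>N. \<Sum>l\<in>N. if j \<in> S \<and> l \<in> T then f j * g l else 0)"
proof -
  have "(\<Sum>j\<in>S. f j) * (\<Sum>l\<in>T. g l)
      = (\<Sum>j\<in>N. if j \<in> S then f j else 0) * (\<Sum>l\<in>N. if l \<in> T then g l else 0)"
    using assms by (simp add: Int_absorb1 flip: sum.inter_restrict)
  also have "\<dots> = (\<Sum>j\<in>N. \<Sum>l\<in>N. if j \<in> S \<and> l \<in> T then f j * g l else 0)"
    unfolding sum_product by (intro sum.cong refl) simp
  finally show ?thesis .
qed

definition crosses :: "nat \<Rightarrow> (nat \<Rightarrow> nat \<Rightarrow> real) \<Rightarrow> nat set \<Rightarrow> nat set \<Rightarrow> bool" where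
  "crosses n M S T \<longleftrightarrow> (\<exists>i\<in>S. \<exists>j\<in>T. (i, j) \<in> edges n M \<or> (j, i) \<in> edges n M)"

locale mixing_sequence =
  fixes n :: nat and \<eta> :: real and A :: "nat \<Rightarrow> nat \<Rightarrow> nat \<Rightarrow> real"
  assumes eta_pos: "\<eta> > 0"
    and mixing: "\<forall>k. doubly_stochastic n (A k) \<and> (\<forall>i\<in>{1..n}. A k i i > 0) \<and>
          (\<forall>i\<in>{1..n}. \<forall>j\<in>{1..n}. A k i j > 0 \<longrightarrow> A k i j \<ge> \<eta>)"
begin

abbreviation N :: "nat set" where "N \<equiv> {1..n}"

lemma nonneg: "i \<in> N \<Longrightarrow> j \<in> N \<Longrightarrow> A t i j \<ge> 0"
  using mixing unfolding doubly_stochastic_def by blast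

lemma row_sum: "i \<in> N \<Longrightarrow> (\<Sum>j\<in>N. A t i j) = 1"
  using mixing unfolding doubly_stochastic_def by blast

lemma col_sum: "j \<in> N \<Longrightarrow> (\<Sum>i\<in>N. A t i j) = 1"
  using mixing unfolding doubly_stochastic_def by blast

lemma pos_entry_ge: "i \<in> N \<Longrightarrow> j \<in> N \<Longrightarrow> A t i j > 0 \<Longrightarrow> \<eta> \<le> A t i j"
  using mixing by blast

lemma diag_ge: "i \<in> N \<Longrightarrow> \<eta> \<le> A t i i"
  using mixing by blast

lemma entry_le_row_mass: "X \<subseteq> N \<Longrightarrow> i \<in> N \<Longrightarrow> j \<in> X \<Longrightarrow> A t i j \<le> (\<Sum>l\<in>X. A t i l)"
  using nonneg by (intro member_le_sum) (auto intro: finite_subset)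

lemma row_mass_ge: "X \<subseteq> N \<Longrightarrow> i \<in> N \<Longrightarrow> j \<in> X \<Longrightarrow> \<eta> \<le> A t i j \<Longrightarrow> \<eta> \<le> (\<Sum>l\<in>X. A t i l)"
  using entry_le_row_mass order_trans by blast

lemma eta_le_1: "n \<ge> 1 \<Longrightarrow> \<eta> \<le> 1"
  using diag_ge[of 1 0] entry_le_row_mass[of N 1 1 0] row_sum[of 1 0] by simp

lemma row_mean_ge:
  assumes "i \<in> N" "\<And>j. j \<in> N \<Longrightarrow> A t i j \<noteq> 0 \<Longrightarrow> c \<le> z j"
  shows "c \<le> (\<Sum>j\<in>N. A t i j * z j)"
proof -
  have "c = (\<Sum>j\<in>N. A t i j * c)" using row_sum[OF assms(1)] by (simp flip: sum_distrib_right)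
  also have "\<dots> \<le> (\<Sum>j\<in>N. A t i j * z j)"
  proof (rule sum_mono)
    fix j assume "j \<in> N"
    then show "A t i j * c \<le> A t i j * z j"
      using assms nonneg[OF assms(1)] by (cases "A t i j = 0") (auto intro: mult_left_mono)
  qed
  finally show ?thesis .
qed

lemma row_mean_le:
  assumes "i \<in> N" "\<And>j. j \<in> N \<Longrightarrow> A t i j \<noteq> 0 \<Longrightarrow> z j \<le> c"
  shows "(\<Sum>j\<in>N. A t i j * z j) \<le> c"
  using row_mean_ge[of i t "-c" "\<lambda>j. - z j"] assms by (simp add: sum_negf)

lemma sum_row_means: "(\<Sum>i\<in>N. \<Sum>j\<in>N. A t i j * z j) = (\<Sum>j\<in>N. z j)"
proof -
  have "(\<Sum>i\<in>N. \<Sum>j\<in>N. A t i j * z j) = (\<Sum>j\<in>N. (\<Sum>i\<in>N. A t i j) * z j)"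
    by (subst sum.swap) (simp add: sum_distrib_right)
  also have "\<dots> = (\<Sum>j\<in>N. z j)" using col_sum by simp
  finally show ?thesis .
qed

text \<open>Twice the sum over the rows of the variance of z under the row weights.\<close>

definition dissipation :: "nat \<Rightarrow> (nat \<Rightarrow> real) \<Rightarrow> real" where
  "dissipation t z = (\<Sum>i\<in>N. \<Sum>j\<in>N. \<Sum>l\<in>N. A t i j * A t i l * (z j - z l)^2)"

lemma sum_sq_dist_row_means:
  "(\<Sum>i\<in>N. ((\<Sum>j\<in>N. A t i j * z j) - c)^2) = (\<Sum>i\<in>N. (z i - c)^2) - dissipation t z / 2"
proof -
  have "((\<Sum>j\<in>N. A t i j * z j) - c)^2
      = (\<Sum>j\<in>N. A t i j * (z j - c)^2) - (\<Sum>j\<in>N. \<Sum>l\<in>N. A t i j * A t i l * (z j - z l)^2) / 2"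
    if "i \<in> N" for i
  proof -
    have "(\<Sum>j\<in>N. A t i j * (z j - c)) = (\<Sum>j\<in>N. A t i j * z j) - c"
      using row_sum[OF that] by (simp add: right_diff_distrib sum_subtractf flip: sum_distrib_right)
    then show ?thesis
      using weighted_mean_sq_eq[of N "A t i" "\<lambda>j. z j - c"] row_sum[OF that] by simp
  qed
  then show ?thesis
    using sum_row_means[of t "\<lambda>j. (z j - c)^2"]
    by (simp add: dissipation_def sum_subtractf flip: sum_divide_distrib)
qed

lemma not_crosses_entries_zero:
  assumes "\<not> crosses n (A t) S T" "S \<subseteq> N" "T \<subseteq> N" "i \<in> S" "j \<in> T"
  shows "A t i j = 0" "A t j i = 0"
proof -
  have "i \<in> N" "j \<in> N" using assms(2-5) by auto
  moreover have "(j, i) \<notin> edges n (A t)" "(i, j) \<notin> edges n (A t)"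
    using assms(1,4,5) unfolding crosses_def by blast+
  ultimately show "A t i j = 0" "A t j i = 0"
    using nonneg[of i j t] nonneg[of j i t] unfolding edges_def by auto
qed

lemma crossing_row_mass:
  assumes ST: "S \<union> T = N" "S \<inter> T = {}" and "crosses n (A t) S T"
  shows "\<eta> / 2 \<le> (\<Sum>i\<in>N. (\<Sum>j\<in>S. A t i j) * (\<Sum>l\<in>T. A t i l))"
proof -
  have sub: "S \<subseteq> N" "T \<subseteq> N" using ST by auto
  have "\<exists>r\<in>N. \<eta> \<le> (\<Sum>j\<in>S. A t r j) \<and> \<eta> \<le> (\<Sum>l\<in>T. A t r l)"
  proof -
    obtain i j where ij: "i \<in> S" "j \<in> T" and "A t j i > 0 \<or> A t i j > 0"
      using assms(3) unfolding crosses_def edges_def by auto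
    have "i \<in> N" "j \<in> N" using ij sub by auto
    consider "A t j i > 0" | "A t i j > 0" using \<open>A t j i > 0 \<or> A t i j > 0\<close> by blast
    then show ?thesis
    proof cases
      case 1
      have "\<eta> \<le> (\<Sum>l\<in>S. A t j l)" using ij sub \<open>i \<in> N\<close> \<open>j \<in> N\<close> 1
        by (intro row_mass_ge pos_entry_ge)
      moreover have "\<eta> \<le> (\<Sum>l\<in>T. A t j l)" using ij sub diag_ge[of j t] by (intro row_mass_ge) auto
      ultimately show ?thesis using \<open>j \<in> N\<close> by blast
    next
      case 2
      have "\<eta> \<le> (\<Sum>l\<in>S. A t i l)" using ij sub diag_ge[of i t] by (intro row_mass_ge) auto
      moreover have "\<eta> \<le> (\<Sum>l\<in>T. A t i l)" using ij sub \<open>i \<in> N\<close> \<open>j \<in> N\<close> 2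
        by (intro row_mass_ge pos_entry_ge)
      ultimately show ?thesis using \<open>i \<in> N\<close> by blast
    qed
  qed
  then obtain r where r: "r \<in> N" and p: "\<eta> \<le> (\<Sum>j\<in>S. A t r j)" and q: "\<eta> \<le> (\<Sum>l\<in>T. A t r l)"
    by blast
  have pq: "(\<Sum>j\<in>S. A t r j) + (\<Sum>l\<in>T. A t r l) = 1"
    using row_sum[OF r] sum.union_disjoint[of S T "A t r"] ST finite_subset[OF sub(1)]
      finite_subset[OF sub(2)] by simp
  \<comment> \<open>two masses summing to 1, both at least \<eta>: the larger one is at least 1/2\<close>
  have "\<eta> / 2 \<le> (\<Sum>j\<in>S. A t r j) * (\<Sum>l\<in>T. A t r l)"
  proof (cases "(\<Sum>j\<in>S. A t r j) \<ge> 1/2")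
    case True
    then have "(1/2) * (\<Sum>l\<in>T. A t r l) \<le> (\<Sum>j\<in>S. A t r j) * (\<Sum>l\<in>T. A t r l)"
      using q eta_pos by (intro mult_right_mono) auto
    then show ?thesis using q by linarith
  next
    case False
    then have "(\<Sum>j\<in>S. A t r j) * (1/2) \<le> (\<Sum>j\<in>S. A t r j) * (\<Sum>l\<in>T. A t r l)"
      using p pq eta_pos by (intro mult_left_mono) auto
    then show ?thesis using p by linarith
  qed
  also have "\<dots> \<le> (\<Sum>i\<in>N. (\<Sum>j\<in>S. A t i j) * (\<Sum>l\<in>T. A t i l))"
    using r sub nonneg by (intro member_le_sum mult_nonneg_nonneg sum_nonneg) auto
  finally show ?thesis .
qed

lemma dissipation_ge_cuts:
  assumes "finite P"
    and cut: "\<And>d. d \<in> P \<Longrightarrow> S d \<union> T d = N \<and> S d \<inter> T d = {}"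
    and crossing: "\<And>d. d \<in> P \<Longrightarrow> crosses n (A t) (S d) (T d)"
    and h_nonneg: "\<And>d. d \<in> P \<Longrightarrow> 0 \<le> h d"
    and h_le: "\<And>j l. j \<in> N \<Longrightarrow> l \<in> N \<Longrightarrow> (\<Sum>d\<in>{d\<in>P. j \<in> S d \<and> l \<in> T d}. h d) \<le> (z j - z l)^2"
  shows "\<eta> / 2 * (\<Sum>d\<in>P. h d) \<le> dissipation t z"
proof -
  have "\<eta> / 2 * (\<Sum>d\<in>P. h d) = (\<Sum>d\<in>P. h d * (\<eta> / 2))"
    by (simp add: sum_distrib_left mult.commute)
  also have "\<dots> \<le> (\<Sum>d\<in>P. h d * (\<Sum>i\<in>N. (\<Sum>j\<in>S d. A t i j) * (\<Sum>l\<in>T d. A t i l)))"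
    using crossing_row_mass cut crossing h_nonneg by (intro sum_mono mult_left_mono) auto
  also have "\<dots> = (\<Sum>d\<in>P. \<Sum>i\<in>N. \<Sum>j\<in>N. \<Sum>l\<in>N.
      if j \<in> S d \<and> l \<in> T d then A t i j * A t i l * h d else 0)"
  proof (intro sum.cong refl)
    fix d assume "d \<in> P"
    then have "S d \<subseteq> N" "T d \<subseteq> N" using cut by auto
    then have "h d * ((\<Sum>j\<in>S d. A t i j) * (\<Sum>l\<in>T d. A t i l))
      = (\<Sum>j\<in>N. \<Sum>l\<in>N. if j \<in> S d \<and> l \<in> T d then A t i j * A t i l * h d else 0)" for i
      unfolding sum_product_restrict[OF finite_atLeastAtMost \<open>S d \<subseteq> N\<close> \<open>T d \<subseteq> N\<close>]
        sum_distrib_left[of "h d"]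
      by (intro sum.cong refl) simp
    then show "h d * (\<Sum>i\<in>N. (\<Sum>j\<in>S d. A t i j) * (\<Sum>l\<in>T d. A t i l))
      = (\<Sum>i\<in>N. \<Sum>j\<in>N. \<Sum>l\<in>N. if j \<in> S d \<and> l \<in> T d then A t i j * A t i l * h d else 0)"
      by (simp only: sum_distrib_left[of "h d" _ N])
  qed
  also have "\<dots> = (\<Sum>i\<in>N. \<Sum>j\<in>N. \<Sum>l\<in>N. \<Sum>d\<in>P.
      if j \<in> S d \<and> l \<in> T d then A t i j * A t i l * h d else 0)"
    by (subst sum.swap, rule sum.cong, simp, subst sum.swap, rule sum.cong, simp, subst sum.swap, simp)
  also have "\<dots> = (\<Sum>i\<in>N. \<Sum>j\<in>N. \<Sum>l\<in>N. A t i j * A t i l * (\<Sum>d\<in>{d\<in>P. j \<in> S d \<and> l \<in> T d}. h d))"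
    unfolding sum.inter_filter[OF \<open>finite P\<close>] sum_distrib_left by (intro sum.cong refl) simp
  also have "\<dots> \<le> dissipation t z"
    unfolding dissipation_def using h_le nonneg by (intro sum_mono mult_left_mono) auto
  finally show ?thesis .
qed

end

section \<open>The quantized dynamics\<close>

locale quantized_dynamics = mixing_sequence +
  fixes Q :: nat and x0 :: "nat \<Rightarrow> real"
  assumes Q_ge_1: "Q \<ge> 1"
    and initial_on_grid: "\<forall>i\<in>{1..n}. \<exists>m::int. x0 i = real_of_int m / real Q"
begin

abbreviation x :: "nat \<Rightarrow> nat \<Rightarrow> real" where "x \<equiv> traj n Q A x0"

lemma on_grid_traj:
  assumes "i \<in> N"
  shows "on_grid Q (x t i)"
proof (cases t)
  case 0
  then show ?thesis using initial_on_grid assms unfolding on_grid_def by simp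
qed (simp add: on_grid_floorQ)

lemma traj_Suc_ge:
  assumes "i \<in> N" "on_grid Q a" "\<And>j. j \<in> N \<Longrightarrow> A t i j \<noteq> 0 \<Longrightarrow> a \<le> x t j"
  shows "a \<le> x (Suc t) i"
  using floorQ_greatest[OF Q_ge_1 assms(2) row_mean_ge[OF assms(1,3)]] by simp

lemma traj_Suc_le:
  assumes "i \<in> N" "\<And>j. j \<in> N \<Longrightarrow> A t i j \<noteq> 0 \<Longrightarrow> x t j \<le> b"
  shows "x (Suc t) i \<le> b"
proof -
  have "(\<Sum>j\<in>N. A t i j * x t j) \<le> b" using assms by (rule row_mean_le)
  then show ?thesis using floorQ_le[OF Q_ge_1, of "\<Sum>j\<in>N. A t i j * x t j"] by simp
qed

lemma lower_bound_persists:
  assumes "on_grid Q a" "\<forall>i\<in>N. a \<le> x t i" "t \<le> s"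
  shows "\<forall>i\<in>N. a \<le> x s i"
  using assms(3)
proof (induction s rule: dec_induct)
  case (step s)
  then show ?case by (intro ballI traj_Suc_ge[OF _ assms(1)]) auto
qed (use assms(2) in simp)

lemma consensus_persists:
  assumes "on_grid Q v" "\<forall>i\<in>N. x t i = v" "t \<le> s"
  shows "\<forall>i\<in>N. x s i = v"
  using assms(3)
proof (induction s rule: dec_induct)
  case (step s)
  show ?case
  proof
    fix i assume "i \<in> N"
    have "v \<le> x (Suc s) i" using step.IH by (intro traj_Suc_ge[OF \<open>i \<in> N\<close> assms(1)]) auto
    moreover have "x (Suc s) i \<le> v" using step.IH by (intro traj_Suc_le[OF \<open>i \<in> N\<close>]) auto
    ultimately show "x (Suc s) i = v" by simp
  qed
qed (use assms(2) in simp)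

lemma cut_persists:
  assumes cut: "S \<union> T = N" "S \<inter> T = {}" and "on_grid Q a"
    and no_cross: "\<And>s. t \<le> s \<Longrightarrow> s < t' \<Longrightarrow> \<not> crosses n (A s) S T"
    and "\<forall>i\<in>S. a \<le> x t i" "\<forall>j\<in>T. x t j \<le> b" "t \<le> t'"
  shows "(\<forall>i\<in>S. a \<le> x t' i) \<and> (\<forall>j\<in>T. x t' j \<le> b)"
  using \<open>t \<le> t'\<close> no_cross
proof (induction t' rule: dec_induct)
  case (step s)
  have sub: "S \<subseteq> N" "T \<subseteq> N" using cut by auto
  have "\<not> crosses n (A s) S T" using step by simp
  note zero = not_crosses_entries_zero[OF this sub]
  have IH: "\<forall>i\<in>S. a \<le> x s i" "\<forall>j\<in>T. x s j \<le> b" using step by auto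
  show ?case
  proof (intro conjI ballI)
    fix i assume "i \<in> S"
    show "a \<le> x (Suc s) i"
    proof (rule traj_Suc_ge[OF _ \<open>on_grid Q a\<close>])
      show "i \<in> N" using \<open>i \<in> S\<close> sub by auto
      fix j assume "j \<in> N" "A s i j \<noteq> 0"
      then have "j \<in> S" using zero(1)[OF \<open>i \<in> S\<close>] cut by blast
      then show "a \<le> x s j" using IH by blast
    qed
  next
    fix j assume "j \<in> T"
    show "x (Suc s) j \<le> b"
    proof (rule traj_Suc_le)
      show "j \<in> N" using \<open>j \<in> T\<close> sub by auto
      fix l assume "l \<in> N" "A s j l \<noteq> 0"
      then have "l \<in> T" using zero(2)[OF _ \<open>j \<in> T\<close>] cut by blast
      then show "x s l \<le> b" using IH by blast
    qed
  qed
qed (use assms in simp)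

lemma sorted_cut_persists:
  assumes \<sigma>: "\<sigma> permutes N"
    and sorted: "\<And>p q. 1 \<le> p \<Longrightarrow> p \<le> q \<Longrightarrow> q \<le> n \<Longrightarrow> x t0 (\<sigma> q) \<le> x t0 (\<sigma> p)"
    and "d \<in> {1..<n}" "t0 \<le> t"
    and no_cross: "\<And>s. t0 \<le> s \<Longrightarrow> s < t \<Longrightarrow> \<not> crosses n (A s) (\<sigma> ` {1..d}) (\<sigma> ` {Suc d..n})"
  shows "(\<forall>i\<in>\<sigma> ` {1..d}. x t0 (\<sigma> d) \<le> x t i) \<and> (\<forall>j\<in>\<sigma> ` {Suc d..n}. x t j \<le> x t0 (\<sigma> (Suc d)))"
proof (rule cut_persists[OF _ _ _ no_cross _ _ \<open>t0 \<le> t\<close>])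
  show "\<sigma> ` {1..d} \<union> \<sigma> ` {Suc d..n} = N" "\<sigma> ` {1..d} \<inter> \<sigma> ` {Suc d..n} = {}"
    using permutes_image_split[OF \<sigma>, of d] \<open>d \<in> {1..<n}\<close> by auto
  show "on_grid Q (x t0 (\<sigma> d))" using \<open>d \<in> {1..<n}\<close> permutes_in_image[OF \<sigma>] on_grid_traj by auto
  show "\<forall>i\<in>\<sigma> ` {1..d}. x t0 (\<sigma> d) \<le> x t0 i" "\<forall>j\<in>\<sigma> ` {Suc d..n}. x t0 j \<le> x t0 (\<sigma> (Suc d))"
    using \<open>d \<in> {1..<n}\<close> sorted by auto
qed

definition energy :: "real \<Rightarrow> nat \<Rightarrow> real" where
  "energy c t = (\<Sum>i\<in>N. (x t i - c)^2)"

lemma energy_step: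
  assumes "on_grid Q c" "\<forall>i\<in>N. c \<le> x t i"
  shows "energy c (Suc t) \<le> energy c t - dissipation t (x t) / 2"
proof -
  have "energy c (Suc t) \<le> (\<Sum>i\<in>N. ((\<Sum>j\<in>N. A t i j * x t j) - c)^2)"
    unfolding energy_def
  proof (rule sum_mono)
    fix i assume "i \<in> N"
    have "c \<le> x (Suc t) i" using assms by (intro traj_Suc_ge[OF \<open>i \<in> N\<close>]) auto
    moreover have "x (Suc t) i \<le> (\<Sum>j\<in>N. A t i j * x t j)" using floorQ_le[OF Q_ge_1] by simp
    ultimately show "(x (Suc t) i - c)^2 \<le> ((\<Sum>j\<in>N. A t i j * x t j) - c)^2"
      by (intro power_mono) auto
  qed
  also have "\<dots> = energy c t - dissipation t (x t) / 2"
    unfolding energy_def by (rule sum_sq_dist_row_means)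
  finally show ?thesis .
qed

lemma energy_decrease:
  assumes "on_grid Q c" "\<forall>i\<in>N. c \<le> x t0 i" "t0 \<le> t1"
  shows "energy c t1 + (\<Sum>t\<in>{t0..<t1}. dissipation t (x t)) / 2 \<le> energy c t0"
  using assms(3)
proof (induction t1 rule: dec_induct)
  case (step t)
  have "energy c (Suc t) \<le> energy c t - dissipation t (x t) / 2"
    using energy_step[OF assms(1) lower_bound_persists[OF assms(1,2) step.hyps(1)]] .
  then show ?case using step.IH step.hyps(1) by (simp add: field_simps)
qed simp

lemma sum_traj_le: "(\<Sum>i\<in>N. x t i) \<le> (\<Sum>i\<in>N. x0 i)"
proof (induction t)
  case (Suc t)
  have "(\<Sum>i\<in>N. x (Suc t) i) \<le> (\<Sum>i\<in>N. \<Sum>j\<in>N. A t i j * x t j)"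
    using floorQ_le[OF Q_ge_1] by (simp add: sum_mono)
  then show ?case using Suc sum_row_means[of t "x t"] by simp
qed simp

lemma sum_traj_ge: "(\<Sum>i\<in>N. x0 i) - real n * real t / Q \<le> (\<Sum>i\<in>N. x t i)"
proof (induction t)
  case (Suc t)
  have "(\<Sum>i\<in>N. (\<Sum>j\<in>N. A t i j * x t j) - 1 / Q) \<le> (\<Sum>i\<in>N. x (Suc t) i)"
    using floorQ_gt[OF Q_ge_1] by (simp add: sum_mono less_imp_le)
  then have "(\<Sum>i\<in>N. x t i) - real n / Q \<le> (\<Sum>i\<in>N. x (Suc t) i)"
    using sum_row_means[of t "x t"] by (simp add: sum_subtractf)
  then show ?case using Suc by (simp add: add_divide_distrib algebra_simps)
qed simp

lemma consensus_near_average: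
  assumes "n \<ge> 1" "\<forall>i\<in>N. x t i = v"
  shows "\<bar>v - (\<Sum>i=1..n. x0 i) / real n\<bar> \<le> real t / real Q"
proof -
  have "(\<Sum>i\<in>N. x t i) = real n * v" using assms(2) by simp
  then have "(\<Sum>i\<in>N. x0 i) - real n * real t / Q \<le> real n * v" "real n * v \<le> (\<Sum>i\<in>N. x0 i)"
    using sum_traj_ge[of t] sum_traj_le[of t] by simp_all
  then show ?thesis using assms(1) by (simp add: abs_le_iff field_simps)
qed

lemma nonconstant_initial_spread:
  assumes "\<exists>i\<in>N. \<exists>j\<in>N. x0 i \<noteq> x0 j"
  shows "n \<ge> 2" "1 \<le> real Q * (Max (x0 ` N) - Min (x0 ` N))"
proof -
  obtain i j where ij: "i \<in> N" "j \<in> N" "x0 i \<noteq> x0 j" using assms by blast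
  then show n: "n \<ge> 2" by (cases "i = j") auto
  define U L where "U = Max (x0 ` N)" and "L = Min (x0 ` N)"
  have "L \<le> x0 i" "x0 i \<le> U" "L \<le> x0 j" "x0 j \<le> U" using ij by (simp_all add: L_def U_def)
  then have "L < U" using ij(3) by (metis linorder_neq_iff order_le_less_trans order_less_le_trans)
  moreover have "U \<in> x0 ` N" "L \<in> x0 ` N" unfolding U_def L_def using n by (intro Max_in Min_in; auto)+
  then have "on_grid Q U" "on_grid Q L" using on_grid_traj[of _ 0] by auto
  ultimately have "1 / real Q \<le> U - L" by (intro on_grid_gap[OF Q_ge_1])
  then show "1 \<le> real Q * (Max (x0 ` N) - Min (x0 ` N))"
    using Q_ge_1 by (simp add: U_def L_def divide_le_eq mult.commute)
qed

lemma dissipation_ge_separated_gaps: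
  assumes \<sigma>: "\<sigma> permutes N"
    and sorted: "\<And>p q. 1 \<le> p \<Longrightarrow> p \<le> q \<Longrightarrow> q \<le> n \<Longrightarrow> x t0 (\<sigma> q) \<le> x t0 (\<sigma> p)"
    and D: "D \<subseteq> {1..<n}"
    and crossing: "\<And>d. d \<in> D \<Longrightarrow> crosses n (A t) (\<sigma> ` {1..d}) (\<sigma> ` {Suc d..n})"
    and separated: "\<And>d. d \<in> D \<Longrightarrow>
      (\<forall>i\<in>\<sigma> ` {1..d}. x t0 (\<sigma> d) \<le> x t i) \<and> (\<forall>j\<in>\<sigma> ` {Suc d..n}. x t j \<le> x t0 (\<sigma> (Suc d)))"
  shows "\<eta> / 2 * (\<Sum>d\<in>D. (x t0 (\<sigma> d) - x t0 (\<sigma> (Suc d)))^2) \<le> dissipation t (x t)"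
proof (rule dissipation_ge_cuts)
  show "finite D" using D finite_subset by blast
  show "\<sigma> ` {1..d} \<union> \<sigma> ` {Suc d..n} = N \<and> \<sigma> ` {1..d} \<inter> \<sigma> ` {Suc d..n} = {}" if "d \<in> D" for d
  proof -
    have "d \<le> n" using that D by auto
    then show ?thesis using permutes_image_split[OF \<sigma>] by blast
  qed
  fix j l assume "j \<in> N" "l \<in> N"
  show "(\<Sum>d\<in>{d\<in>D. j \<in> \<sigma> ` {1..d} \<and> l \<in> \<sigma> ` {Suc d..n}}. (x t0 (\<sigma> d) - x t0 (\<sigma> (Suc d)))^2)
      \<le> (x t j - x t l)^2"
    using D separated sorted by (intro sum_sq_gaps_le[where m = 1 and n = n]) auto
qed (use crossing in auto)

lemma dissipation_ge_sq_gaps: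
  assumes \<sigma>: "\<sigma> permutes N"
    and sorted: "\<And>p q. 1 \<le> p \<Longrightarrow> p \<le> q \<Longrightarrow> q \<le> n \<Longrightarrow> x t0 (\<sigma> q) \<le> x t0 (\<sigma> p)"
    and crossed: "\<And>d. d \<in> {1..<n} \<Longrightarrow> x t0 (\<sigma> d) \<noteq> x t0 (\<sigma> (Suc d)) \<Longrightarrow>
      \<exists>t\<in>{t0..<t1}. crosses n (A t) (\<sigma> ` {1..d}) (\<sigma> ` {Suc d..n})"
  shows "\<eta> / 2 * (\<Sum>d\<in>{1..<n}. (x t0 (\<sigma> d) - x t0 (\<sigma> (Suc d)))^2)
       \<le> (\<Sum>t\<in>{t0..<t1}. dissipation t (x t))"
proof -
  define gap where "gap d = x t0 (\<sigma> d) - x t0 (\<sigma> (Suc d))" for d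
  define S T where "S d = \<sigma> ` {1..d}" and "T d = \<sigma> ` {Suc d..n}" for d
  define G where "G = {d\<in>{1..<n}. gap d \<noteq> 0}"
  define first where "first d = (LEAST t. t \<in> {t0..<t1} \<and> crosses n (A t) (S d) (T d))" for d
  have crossed_in_window: "\<exists>t. t \<in> {t0..<t1} \<and> crosses n (A t) (S d) (T d)" if "d \<in> G" for d
    using crossed[of d] that unfolding G_def gap_def S_def T_def by auto
  have first: "first d \<in> {t0..<t1} \<and> crosses n (A (first d)) (S d) (T d)" if "d \<in> G" for d
    unfolding first_def by (rule LeastI_ex[OF crossed_in_window[OF that]])
  have separated: "(\<forall>i\<in>S d. x t0 (\<sigma> d) \<le> x (first d) i) \<and> (\<forall>j\<in>T d. x (first d) j \<le> x t0 (\<sigma> (Suc d)))"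
    if "d \<in> G" for d
    unfolding S_def T_def
  proof (rule sorted_cut_persists[OF \<sigma> sorted])
    show "d \<in> {1..<n}" "t0 \<le> first d" using that first[OF that] by (auto simp: G_def)
    show "\<not> crosses n (A s) (\<sigma> ` {1..d}) (\<sigma> ` {Suc d..n})" if "t0 \<le> s" "s < first d" for s
    proof
      assume "crosses n (A s) (\<sigma> ` {1..d}) (\<sigma> ` {Suc d..n})"
      moreover have "s \<in> {t0..<t1}" using that first[OF \<open>d \<in> G\<close>] by auto
      ultimately have "first d \<le> s" unfolding first_def S_def T_def by (intro Least_le) simp
      then show False using that by simp
    qed
  qed
  have "(\<Sum>d\<in>{1..<n}. (gap d)^2) = (\<Sum>d\<in>G. (gap d)^2)"
    by (rule sum.mono_neutral_right) (auto simp: G_def)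
  also have "\<dots> = (\<Sum>t\<in>{t0..<t1}. \<Sum>d\<in>{d\<in>G. first d = t}. (gap d)^2)"
    using first by (intro sum.group[symmetric]) (auto simp: G_def)
  finally have "\<eta> / 2 * (\<Sum>d\<in>{1..<n}. (gap d)^2)
      = (\<Sum>t\<in>{t0..<t1}. \<eta> / 2 * (\<Sum>d\<in>{d\<in>G. first d = t}. (gap d)^2))"
    by (simp add: sum_distrib_left)
  also have "\<dots> \<le> (\<Sum>t\<in>{t0..<t1}. dissipation t (x t))"
  proof (rule sum_mono)
    fix t assume "t \<in> {t0..<t1}"
    show "\<eta> / 2 * (\<Sum>d\<in>{d\<in>G. first d = t}. (gap d)^2) \<le> dissipation t (x t)"
      unfolding gap_def
      using separated first by (intro dissipation_ge_separated_gaps[OF \<sigma> sorted])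
        (auto simp: G_def S_def T_def)
  qed
  finally show ?thesis unfolding gap_def .
qed

end

section \<open>Convergence under the cut condition\<close>

lemma geometric_decay_time:
  fixes a R :: real
  assumes "0 < a" "a \<le> 1" "1 \<le> R"
  obtains K :: nat where "(1 - a)^K < 1 / R" "real K \<le> ln R / a + 2"
proof -
  define K where "K = nat \<lceil>ln R / a\<rceil> + 1"
  have "0 \<le> ln R / a" using assms by simp
  then have lt: "ln R / a < real K" and le: "real K \<le> ln R / a + 2"
    unfolding K_def by linarith+
  have "(1 - a)^K \<le> exp (- a)^K"
    using assms exp_ge_add_one_self[of "- a"] by (intro power_mono) auto
  also have "\<dots> = exp (- (a * real K))" by (simp add: mult.commute flip: exp_of_nat_mult)
  also have "\<dots> < exp (- ln R)" using lt assms(1) by (simp add: divide_less_eq mult.commute)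
  also have "\<dots> = 1 / R" using assms(3) by (simp add: exp_minus inverse_eq_divide)
  finally show ?thesis using that le by blast
qed

text \<open>This is where the absolute constant 9 of the theorem comes from.\<close>

lemma decay_time_le:
  fixes m D \<eta> :: real
  assumes "2 \<le> m" "1 \<le> D" "0 < \<eta>" "\<eta> \<le> 1"
  shows "ln (m * D^2) / (\<eta> / (4 * m^2)) + 2 \<le> 9 * (m^2 / \<eta>) * ln (m * D)"
proof -
  define M where "M = m^2 / \<eta>"
  have "4 \<le> m^2" using power_mono[of 2 m 2] assms(1) by simp
  also have "m^2 \<le> M" unfolding M_def using assms(3,4) by (simp add: le_divide_eq mult_left_le)
  finally have M: "4 \<le> M" .
  have "ln (m * D^2) = ln m + 2 * ln D" using assms(1,2) by (simp add: ln_mult ln_realpow)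
  also have "\<dots> \<le> 2 * ln (m * D)" using assms(1,2) by (simp add: ln_mult)
  finally have "ln (m * D^2) \<le> 2 * ln (m * D)" .
  then have "4 * M * ln (m * D^2) \<le> 4 * M * (2 * ln (m * D))"
    using M by (intro mult_left_mono) auto
  moreover have "ln (m * D^2) / (\<eta> / (4 * m^2)) = 4 * M * ln (m * D^2)"
    unfolding M_def using assms(3) by simp
  ultimately have "ln (m * D^2) / (\<eta> / (4 * m^2)) \<le> 8 * M * ln (m * D)" by simp
  moreover have "2 \<le> M * ln (m * D)"
  proof -
    have "2 \<le> m * D" using assms(1,2) mult_mono[of 2 m 1 D] by simp
    then have "ln 2 \<le> ln (m * D)" by simp
    then have "2 / 3 \<le> ln (m * D)" using ln2_ge_two_thirds by linarith
    then show ?thesis using M mult_mono[of 4 M "2/3" "ln (m * D)"] by simp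
  qed
  ultimately show ?thesis unfolding M_def by linarith
qed

locale quantized_consensus = quantized_dynamics +
  fixes B :: nat
  assumes cuts_crossed: "\<forall>k \<sigma> d. \<sigma> permutes {1..n} \<and>
          (\<forall>p\<in>{1..<n}. traj n Q A x0 (k*B) (\<sigma> p) \<ge> traj n Q A x0 (k*B) (\<sigma> (Suc p))) \<and>
          d \<in> {1..<n} \<longrightarrow>
          traj n Q A x0 (k*B) (\<sigma> d) = traj n Q A x0 (k*B) (\<sigma> (Suc d)) \<or>
          (\<exists>t\<in>{k*B..<(Suc k)*B}. \<exists>i\<in>\<sigma> ` {1..d}. \<exists>j\<in>\<sigma> ` {Suc d..n}.
              (i, j) \<in> edges n (A t) \<or> (j, i) \<in> edges n (A t))"
begin

lemma Min_traj_on_grid: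
  assumes "n \<ge> 1"
  shows "on_grid Q (Min (x t ` N))"
proof -
  have "Min (x t ` N) \<in> x t ` N" using assms by (intro Min_in) auto
  then show ?thesis using on_grid_traj by auto
qed

lemma energy_antimono_center:
  assumes "c \<le> c'" "\<forall>i\<in>N. c' \<le> x t i"
  shows "energy c' t \<le> energy c t"
  unfolding energy_def using assms by (intro sum_mono power_mono) auto

definition window_energy :: "nat \<Rightarrow> real" where
  "window_energy k = energy (Min (x (k * B) ` N)) (k * B)"

lemma window_cuts_crossed:
  assumes \<sigma>: "\<sigma> permutes N"
    and sorted: "\<And>p q. 1 \<le> p \<Longrightarrow> p \<le> q \<Longrightarrow> q \<le> n \<Longrightarrow> x (k * B) (\<sigma> q) \<le> x (k * B) (\<sigma> p)"
    and "d \<in> {1..<n}" "x (k * B) (\<sigma> d) \<noteq> x (k * B) (\<sigma> (Suc d))"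
  shows "\<exists>t\<in>{k * B..<k * B + B}. crosses n (A t) (\<sigma> ` {1..d}) (\<sigma> ` {Suc d..n})"
proof -
  have "\<forall>p\<in>{1..<n}. x (k * B) (\<sigma> (Suc p)) \<le> x (k * B) (\<sigma> p)" using sorted by simp
  then have "\<exists>t\<in>{k * B..<Suc k * B}. crosses n (A t) (\<sigma> ` {1..d}) (\<sigma> ` {Suc d..n})"
    using cuts_crossed \<sigma> assms(3,4) unfolding crosses_def by blast
  then show ?thesis by (simp add: add.commute)
qed

lemma window_contraction:
  assumes "n \<ge> 2"
  shows "energy (Min (x (k * B) ` N)) (k * B + B) \<le> (1 - \<eta> / (4 * (real n)^2)) * window_energy k"
proof -
  define t0 c where "t0 = k * B" and "c = Min (x (k * B) ` N)"
  obtain \<sigma> where \<sigma>: "\<sigma> permutes N"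
    and sorted: "\<And>p q. 1 \<le> p \<Longrightarrow> p \<le> q \<Longrightarrow> q \<le> n \<Longrightarrow> x t0 (\<sigma> q) \<le> x t0 (\<sigma> p)"
    using ex_sorting_permutation by blast
  have c_eq: "c = x t0 (\<sigma> n)" unfolding c_def t0_def
    using sorting_permutation_Min[of \<sigma> n "x t0", OF \<sigma> _ sorted] assms by (simp add: t0_def)
  define gaps where "gaps = (\<Sum>d\<in>{1..<n}. (x t0 (\<sigma> d) - x t0 (\<sigma> (Suc d)))^2)"
  have "\<eta> / 2 * gaps \<le> (\<Sum>t\<in>{t0..<t0 + B}. dissipation t (x t))"
    unfolding gaps_def t0_def using window_cuts_crossed[OF \<sigma> sorted[unfolded t0_def]]
    by (intro dissipation_ge_sq_gaps[OF \<sigma> sorted[unfolded t0_def]])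
  moreover have "energy c (t0 + B) + (\<Sum>t\<in>{t0..<t0 + B}. dissipation t (x t)) / 2 \<le> energy c t0"
    using assms Min_traj_on_grid[of t0] by (intro energy_decrease) (auto simp: c_def t0_def)
  moreover have "energy c t0 \<le> (real n)^2 * gaps"
    unfolding energy_def gaps_def c_eq
    by (rule sum_sq_dist_min_le_sum_sq_gaps[of \<sigma> n "x t0", OF \<sigma> sorted])
  ultimately have "energy c (t0 + B) \<le> energy c t0 - \<eta> / (4 * (real n)^2) * ((real n)^2 * gaps)"
    using assms by (simp add: field_simps)
  also have "\<dots> \<le> energy c t0 - \<eta> / (4 * (real n)^2) * energy c t0"
    using \<open>energy c t0 \<le> (real n)^2 * gaps\<close> eta_pos by (intro diff_left_mono mult_left_mono) auto
  finally show ?thesis unfolding window_energy_def c_def t0_def by (simp add: algebra_simps)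
qed


lemma contraction_rate_bounds:
  assumes "n \<ge> 2"
  shows "0 < \<eta> / (4 * (real n)^2)" "\<eta> / (4 * (real n)^2) \<le> 1"
proof -
  have "1 \<le> (real n)^2" using assms by (intro one_le_power) simp
  moreover have "\<eta> \<le> 1" using eta_le_1 assms by simp
  ultimately show "\<eta> / (4 * (real n)^2) \<le> 1" by (simp add: divide_le_eq)
  show "0 < \<eta> / (4 * (real n)^2)" using eta_pos assms by (intro divide_pos_pos) auto
qed

lemma window_energy_Suc_le:
  assumes "n \<ge> 2"
  shows "window_energy (Suc k) \<le> (1 - \<eta> / (4 * (real n)^2)) * window_energy k"
proof -
  define m m' where "m = Min (x (k * B) ` N)" and "m' = Min (x (Suc k * B) ` N)"
  have "on_grid Q m" unfolding m_def using assms by (intro Min_traj_on_grid) simp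
  then have "\<forall>i\<in>N. m \<le> x (Suc k * B) i"
    by (rule lower_bound_persists[where t = "k * B"]) (auto simp: m_def)
  then have "m \<le> m'" unfolding m'_def using assms by (intro Min.boundedI) auto
  then have "window_energy (Suc k) \<le> energy m (Suc k * B)"
    unfolding window_energy_def m'_def[symmetric] by (rule energy_antimono_center) (simp add: m'_def)
  also have "\<dots> \<le> (1 - \<eta> / (4 * (real n)^2)) * window_energy k"
    using window_contraction[OF assms, of k] by (simp add: m_def add.commute)
  finally show ?thesis .
qed

lemma window_energy_le:
  assumes "n \<ge> 2"
  shows "window_energy k \<le> (1 - \<eta> / (4 * (real n)^2))^k * window_energy 0"
proof (induction k)
  case (Suc k)
  have "0 \<le> 1 - \<eta> / (4 * (real n)^2)" using contraction_rate_bounds[OF assms] by simp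
  with Suc.IH have "(1 - \<eta> / (4 * (real n)^2)) * window_energy k
      \<le> (1 - \<eta> / (4 * (real n)^2)) * ((1 - \<eta> / (4 * (real n)^2))^k * window_energy 0)"
    by (rule mult_left_mono)
  then show ?case using window_energy_Suc_le[OF assms, of k] by simp
qed simp

lemma window_energy_0_le:
  assumes "n \<ge> 1"
  shows "window_energy 0 \<le> real n * (Max (x0 ` N) - Min (x0 ` N))^2"
proof -
  have "window_energy 0 \<le> (\<Sum>i\<in>N. (Max (x0 ` N) - Min (x0 ` N))^2)"
    unfolding window_energy_def energy_def by (intro sum_mono power_mono) auto
  then show ?thesis by simp
qed

lemma consensus_if_window_energy_small:
  assumes "n \<ge> 1" "window_energy k < 1 / (real Q)^2"
  shows "\<forall>i\<in>N. x (k * B) i = Min (x (k * B) ` N)"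
proof
  fix i assume "i \<in> N"
  define m where "m = Min (x (k * B) ` N)"
  show "x (k * B) i = m"
  proof (rule ccontr)
    assume "x (k * B) i \<noteq> m"
    moreover have "m \<le> x (k * B) i" using \<open>i \<in> N\<close> by (simp add: m_def)
    ultimately have "1 / real Q \<le> x (k * B) i - m"
      using on_grid_gap[OF Q_ge_1 on_grid_traj[OF \<open>i \<in> N\<close>] Min_traj_on_grid[OF assms(1)]]
      by (simp add: m_def)
    then have "(1 / real Q)^2 \<le> (x (k * B) i - m)^2" by (intro power_mono) auto
    also have "\<dots> \<le> window_energy k"
      unfolding window_energy_def energy_def m_def using \<open>i \<in> N\<close> by (intro member_le_sum) auto
    finally show False using assms(2) by (simp add: power_divide)
  qed
qed

lemma limit_near_average:
  assumes "n \<ge> 1" "window_energy K < 1 / (real Q)^2"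
  shows "\<exists>xf. (\<forall>i\<in>N. (\<lambda>k. x k i) \<longlonglongrightarrow> xf) \<and>
    \<bar>xf - (\<Sum>i=1..n. x0 i) / real n\<bar> \<le> real (K * B) / real Q"
proof -
  define v where "v = Min (x (K * B) ` N)"
  have consensus: "\<forall>i\<in>N. x (K * B) i = v"
    using consensus_if_window_energy_small[OF assms] unfolding v_def .
  have "\<forall>i\<in>N. x s i = v" if "K * B \<le> s" for s
    using consensus_persists[OF _ consensus that] Min_traj_on_grid[OF assms(1)] by (simp add: v_def)
  then have "(\<lambda>k. x k i) \<longlonglongrightarrow> v" if "i \<in> N" for i
    using that by (intro tendsto_eventually eventually_sequentiallyI[of "K * B"]) auto
  moreover have "\<bar>v - (\<Sum>i=1..n. x0 i) / real n\<bar> \<le> real (K * B) / real Q"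
    by (rule consensus_near_average[OF assms(1) consensus])
  ultimately show ?thesis by blast
qed

theorem converges_near_average:
  assumes "\<exists>i\<in>N. \<exists>j\<in>N. x0 i \<noteq> x0 j"
  shows "\<exists>xf. (\<forall>i\<in>N. (\<lambda>k. x k i) \<longlonglongrightarrow> xf) \<and>
    \<bar>xf - (\<Sum>i=1..n. x0 i) / real n\<bar>
      \<le> 9 / real Q * (real n ^ 2 / \<eta>) * real B * ln (real Q * real n * (Max (x0 ` N) - Min (x0 ` N)))"
proof -
  define D where "D = real Q * (Max (x0 ` N) - Min (x0 ` N))"
  have n: "n \<ge> 2" and D: "1 \<le> D" using nonconstant_initial_spread[OF assms] by (simp_all add: D_def)
  define a R where "a = \<eta> / (4 * (real n)^2)" and "R = real n * D^2"
  have a: "0 < a" "a \<le> 1" unfolding a_def using contraction_rate_bounds[OF n] by simp_all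
  have R: "1 \<le> R" using n mult_mono[of 1 "real n" 1 "D^2"] one_le_power[OF D] by (simp add: R_def)
  obtain K where decay: "(1 - a)^K < 1 / R" and K: "real K \<le> ln R / a + 2"
    using geometric_decay_time[OF a R] .
  have "window_energy K \<le> (1 - a)^K * window_energy 0"
    using window_energy_le[OF n] by (simp add: a_def)
  also have "\<dots> \<le> (1 - a)^K * (R / (real Q)^2)"
    using window_energy_0_le a n Q_ge_1 by (intro mult_left_mono) (auto simp: R_def D_def power_mult_distrib)
  also have "\<dots> < 1 / R * (R / (real Q)^2)"
    using decay R Q_ge_1 by (intro mult_strict_right_mono) auto
  finally have "window_energy K < 1 / (real Q)^2" using R by simp
  then obtain xf where xf: "\<forall>i\<in>N. (\<lambda>k. x k i) \<longlonglongrightarrow> xf"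
    and dev: "\<bar>xf - (\<Sum>i=1..n. x0 i) / real n\<bar> \<le> real (K * B) / real Q"
    using limit_near_average n by fastforce
  have "real K \<le> 9 * ((real n)^2 / \<eta>) * ln (real n * D)"
    using K decay_time_le[of "real n" D \<eta>] n D eta_pos eta_le_1 by (simp add: a_def R_def)
  from mult_right_mono[OF this, of "real B / real Q"]
  have "real (K * B) / real Q
      \<le> 9 / real Q * ((real n)^2 / \<eta>) * real B * ln (real Q * real n * (Max (x0 ` N) - Min (x0 ` N)))"
    by (simp add: D_def divide_inverse mult_ac)
  then show ?thesis using xf dev by fastforce
qed

end

theorem proposition7:
  "\<exists>c::real. \<forall>(n::nat) (\<eta>::real) (B::nat) (Q::nat)
       (A::nat \<Rightarrow> nat \<Rightarrow> nat \<Rightarrow> real) (x0::nat \<Rightarrow> real).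
     \<eta> > 0 \<and> B \<ge> 1 \<and> Q \<ge> 1 \<and>
     (\<forall>i\<in>{1..n}. \<exists>m::int. x0 i = real_of_int m / real Q) \<and>
     (\<exists>i\<in>{1..n}. \<exists>j\<in>{1..n}. x0 i \<noteq> x0 j) \<and>
     (\<forall>k. doubly_stochastic n (A k) \<and> (\<forall>i\<in>{1..n}. A k i i > 0) \<and>
          (\<forall>i\<in>{1..n}. \<forall>j\<in>{1..n}. A k i j > 0 \<longrightarrow> A k i j \<ge> \<eta>)) \<and>
     (\<forall>k \<sigma> d. \<sigma> permutes {1..n} \<and>
          (\<forall>p\<in>{1..<n}. traj n Q A x0 (k*B) (\<sigma> p) \<ge> traj n Q A x0 (k*B) (\<sigma> (Suc p))) \<and>
          d \<in> {1..<n} \<longrightarrow>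
          traj n Q A x0 (k*B) (\<sigma> d) = traj n Q A x0 (k*B) (\<sigma> (Suc d)) \<or>
          (\<exists>t\<in>{k*B..<(Suc k)*B}. \<exists>i\<in>\<sigma> ` {1..d}. \<exists>j\<in>\<sigma> ` {Suc d..n}.
              (i, j) \<in> edges n (A t) \<or> (j, i) \<in> edges n (A t)))
     \<longrightarrow>
     (\<exists>xf::real.
        (\<forall>i\<in>{1..n}. (\<lambda>k. traj n Q A x0 k i) \<longlonglongrightarrow> xf) \<and>
        \<bar>xf - (\<Sum>i=1..n. x0 i) / real n\<bar>
          \<le> c / real Q * (real n ^ 2 / \<eta>) * real B *
             ln (real Q * real n * (Max (x0 ` {1..n}) - Min (x0 ` {1..n}))))"
  by (rule exI[of _ 9], intro allI impI, elim conjE, rule quantized_consensus.converges_near_average)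
    (simp_all add: quantized_consensus_def quantized_consensus_axioms_def quantized_dynamics_def
      quantized_dynamics_axioms_def mixing_sequence_def)

end
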